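(* Let $B\subseteq A$ be commutative unital $\mathbb{R}$-algebras, let $Q'\subseteq A$ be an archimedean quadratic module of $A$, and set $Q:=Q'\cap B$. Then the restriction map $p\colon K_{Q',Y_A}\to K_{Q,Y_B}$, $y\mapsto y|_B$, is surjective. Consequently, if moreover $B\subseteq A\subseteq\mathbb{R}^X$ for a set $X$ and $K_{Q',X}=X$, then $m(X)=K_{Q',Y_A}$ implies $m(X)=K_{Q,Y_B}$, and $\overline{m(X)}=K_{Q',Y_A}$ implies $\overline{m(X)}=K_{Q,Y_B}$.
   Context: A quadratic module of a commutative unital $\mathbb{R}$-algebra $C$ is a subset $Q\subseteq C$ with $Q+Q\subseteq Q$, $c^2Q\subseteq Q$ for all $c\in C$, and $1\in Q$; it is archimedean if for every $c\in C$ there is an integer $n\ge1$ with $n+c\in Q$. $Y_C$ is the set of unital $\mathbb{R}$-algebra homomorphisms $C\to\mathbb{R}$, with the weakest topology making all maps $y\mapsto y(c)$ continuous; $K_{Q,Y_C}:=\{y\in Y_C\mid y(g)\ge0\ \forall g\in Q\}$. For $C\subseteq\mathbb{R}^X$: $K_{Q,X}:=\{x\in X\mid g(x)\ge0\ \forall g\in Q\}$ and $m\colon X\to Y_C$, $m(x)(c)=c(x)$; overlines denote closure in $Y_C$. *)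

theory Defs
  imports "HOL-Analysis.Analysis" "HOL-Library.Function_Algebras"
begin

instantiation "fun" :: (type, real_vector) real_vector
begin
definition scaleR_fun :: "real \<Rightarrow> ('a \<Rightarrow> 'b) \<Rightarrow> 'a \<Rightarrow> 'b"
  where "scaleR_fun r f = (\<lambda>x. r *\<^sub>R f x)"
instance
  by standard (auto simp: scaleR_fun_def fun_eq_iff scaleR_add_right scaleR_add_left)
end

instance "fun" :: (type, real_algebra) real_algebra
  by standard (auto simp: scaleR_fun_def times_fun_def fun_eq_iff)

instance "fun" :: (type, real_algebra_1) real_algebra_1 ..

text \<open>Commutative unital R-algebras are modelled as unital subalgebras C of an
  ambient commutative unital real algebra 'a (take C = UNIV for an algebra given as a type).\<close>

definition subalgebra :: "'a::{comm_ring_1,real_algebra_1} set \<Rightarrow> bool" where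
  "subalgebra C \<longleftrightarrow> 0 \<in> C \<and> 1 \<in> C \<and>
     (\<forall>a\<in>C. \<forall>b\<in>C. a + b \<in> C \<and> a * b \<in> C) \<and>
     (\<forall>a\<in>C. - a \<in> C) \<and> (\<forall>r::real. \<forall>a\<in>C. r *\<^sub>R a \<in> C)"

definition quadratic_module :: "'a::{comm_ring_1,real_algebra_1} set \<Rightarrow> 'a set \<Rightarrow> bool" where
  "quadratic_module C Q \<longleftrightarrow> Q \<subseteq> C \<and>
     (\<forall>a\<in>Q. \<forall>b\<in>Q. a + b \<in> Q) \<and>
     (\<forall>c\<in>C. \<forall>g\<in>Q. c\<^sup>2 * g \<in> Q) \<and> 1 \<in> Q"

definition archimedean :: "'a::{comm_ring_1,real_algebra_1} set \<Rightarrow> 'a set \<Rightarrow> bool" where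
  "archimedean C Q \<longleftrightarrow> (\<forall>c\<in>C. \<exists>n::nat. n \<ge> 1 \<and> of_nat n + c \<in> Q)"

text \<open>Y_C: unital R-algebra homomorphisms C \<rightarrow> R, represented as functions
  that are extensional on C (value undefined outside C).\<close>

definition Ychar :: "'a::{comm_ring_1,real_algebra_1} set \<Rightarrow> ('a \<Rightarrow> real) set" where
  "Ychar C = {y. y \<in> extensional C \<and> y 1 = 1 \<and>
     (\<forall>a\<in>C. \<forall>b\<in>C. y (a + b) = y a + y b \<and> y (a * b) = y a * y b) \<and>
     (\<forall>r. \<forall>a\<in>C. y (r *\<^sub>R a) = r * y a)}"

text \<open>The topology on Y_C: weakest making all y \<mapsto> y(c) (c \<in> C) continuous,
  i.e. the subspace topology of the product topology on R^C.\<close>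

definition Ytop :: "'a::{comm_ring_1,real_algebra_1} set \<Rightarrow> ('a \<Rightarrow> real) topology" where
  "Ytop C = subtopology (powertop_real C) (Ychar C)"

definition KY :: "'a::{comm_ring_1,real_algebra_1} set \<Rightarrow> 'a set \<Rightarrow> ('a \<Rightarrow> real) set" where
  "KY C Q = {y \<in> Ychar C. \<forall>g\<in>Q. y g \<ge> 0}"

definition KX :: "'x set \<Rightarrow> ('x \<Rightarrow> real) set \<Rightarrow> 'x set" where
  "KX X Q = {x \<in> X. \<forall>g\<in>Q. g x \<ge> 0}"

definition mmap :: "('x \<Rightarrow> real) set \<Rightarrow> 'x \<Rightarrow> (('x \<Rightarrow> real) \<Rightarrow> real)" where
  "mmap C x = restrict (\<lambda>c. c x) C"

end

theory Submission
  imports Defs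
begin

text \<open>Let \<open>y\<close> be a character of \<open>B\<close> that is nonnegative on \<open>Q' \<inter> B\<close>. Enlarging \<open>Q'\<close> by the
  kernel of \<open>y\<close>, up to arbitrarily small positive constants, gives a quadratic module of \<open>A\<close>
  that is archimedean (it contains \<open>Q'\<close>) and proper (as \<open>y \<ge> 0\<close> on \<open>Q' \<inter> B\<close>). By Zorn it lies
  in a maximal proper quadratic module \<open>M\<close>; the archimedean property makes \<open>M \<inter> -M\<close> an
  ideal with quotient \<open>\<real>\<close>, and \<open>a \<mapsto> sup {r. a - r \<in> M}\<close> is a character of \<open>A\<close> that is
  nonnegative on \<open>Q'\<close> and extends \<open>y\<close>, because \<open>\<plusminus>(b - y b) \<in> M\<close> for \<open>b \<in> B\<close>.
  The statements about \<open>m(X)\<close> follow since restriction is continuous, maps \<open>m(x)\<close> to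
  \<open>m(x)\<close>, and \<open>K\<^sub>Q\<close> is closed.\<close>

lemma subalgebra_zero: "subalgebra A \<Longrightarrow> 0 \<in> A"
  and subalgebra_one: "subalgebra A \<Longrightarrow> 1 \<in> A"
  and subalgebra_add: "subalgebra A \<Longrightarrow> a \<in> A \<Longrightarrow> b \<in> A \<Longrightarrow> a + b \<in> A"
  and subalgebra_mult: "subalgebra A \<Longrightarrow> a \<in> A \<Longrightarrow> b \<in> A \<Longrightarrow> a * b \<in> A"
  and subalgebra_uminus: "subalgebra A \<Longrightarrow> a \<in> A \<Longrightarrow> - a \<in> A"
  and subalgebra_scaleR: "subalgebra A \<Longrightarrow> a \<in> A \<Longrightarrow> r *\<^sub>R a \<in> A"
  unfolding subalgebra_def by auto

lemma subalgebra_diff: "subalgebra A \<Longrightarrow> a \<in> A \<Longrightarrow> b \<in> A \<Longrightarrow> a - b \<in> A"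
  using subalgebra_add[of A a "- b"] subalgebra_uminus[of A b] by simp

lemma subalgebra_of_real: "subalgebra A \<Longrightarrow> of_real r \<in> A"
  unfolding of_real_def by (intro subalgebra_scaleR subalgebra_one)

lemma subalgebra_power2: "subalgebra A \<Longrightarrow> a \<in> A \<Longrightarrow> a\<^sup>2 \<in> A"
  unfolding power2_eq_square by (rule subalgebra_mult)

lemmas subalgebra_closed = subalgebra_zero subalgebra_one subalgebra_add subalgebra_mult
  subalgebra_uminus subalgebra_scaleR subalgebra_diff subalgebra_of_real subalgebra_power2

lemma quadratic_module_subset: "quadratic_module A M \<Longrightarrow> M \<subseteq> A"
  and quadratic_module_add: "quadratic_module A M \<Longrightarrow> a \<in> M \<Longrightarrow> b \<in> M \<Longrightarrow> a + b \<in> M"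
  and quadratic_module_square_mult: "quadratic_module A M \<Longrightarrow> c \<in> A \<Longrightarrow> g \<in> M \<Longrightarrow> c\<^sup>2 * g \<in> M"
  and quadratic_module_one: "quadratic_module A M \<Longrightarrow> 1 \<in> M"
  unfolding quadratic_module_def by auto

lemma quadratic_module_square: "quadratic_module A M \<Longrightarrow> c \<in> A \<Longrightarrow> c\<^sup>2 \<in> M"
  using quadratic_module_square_mult[of A M c 1] quadratic_module_one[of A M] by simp

lemma quadratic_module_zero: "subalgebra A \<Longrightarrow> quadratic_module A M \<Longrightarrow> 0 \<in> M"
  using quadratic_module_square[of A M 0] subalgebra_zero[of A] by simp

lemma quadratic_module_of_real_mult:
  assumes "subalgebra A" "quadratic_module A M" "x \<in> M" "r \<ge> 0"
  shows "of_real r * x \<in> M"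
proof -
  have "(of_real (sqrt r))\<^sup>2 * x \<in> M"
    using assms by (intro quadratic_module_square_mult subalgebra_of_real)
  moreover have "(of_real (sqrt r) :: 'a)\<^sup>2 = of_real r"
    using assms(4) by (metis of_real_power real_sqrt_pow2)
  ultimately show ?thesis by simp
qed

lemma quadratic_module_of_real:
  "subalgebra A \<Longrightarrow> quadratic_module A M \<Longrightarrow> r \<ge> 0 \<Longrightarrow> of_real r \<in> M"
  using quadratic_module_of_real_mult[of A M 1 r] quadratic_module_one[of A M] by simp

lemma proper_quadratic_module_of_real_nonneg:
  assumes "subalgebra A" "quadratic_module A M" "- 1 \<notin> M" "of_real r \<in> M"
  shows "r \<ge> 0"
proof (rule ccontr)
  assume "\<not> r \<ge> 0"
  then have "of_real (- 1 / r) * of_real r \<in> M"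
    using assms by (intro quadratic_module_of_real_mult) auto
  moreover have "of_real (- 1 / r) * of_real r = (- 1 :: 'a)"
    using \<open>\<not> r \<ge> 0\<close> by (simp flip: of_real_mult)
  ultimately show False using assms(3) by simp
qed

lemma archimedean_upper_bound:
  assumes "archimedean A M" "subalgebra A" "a \<in> A"
  shows "\<exists>N::real. N \<ge> 1 \<and> of_real N - a \<in> M"
proof -
  obtain n :: nat where "n \<ge> 1" "of_nat n + (- a) \<in> M"
    using assms subalgebra_uminus unfolding archimedean_def by blast
  then show ?thesis by (intro exI[of _ "real n"]) auto
qed

lemma archimedean_mono: "archimedean A M \<Longrightarrow> M \<subseteq> N \<Longrightarrow> archimedean A N"
  unfolding archimedean_def by blast

lemma quadratic_module_Union_chain:
  assumes "\<C> \<noteq> {}" and qm: "\<And>N. N \<in> \<C> \<Longrightarrow> quadratic_module A N"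
    and chain: "\<And>N N'. N \<in> \<C> \<Longrightarrow> N' \<in> \<C> \<Longrightarrow> N \<subseteq> N' \<or> N' \<subseteq> N"
  shows "quadratic_module A (\<Union>\<C>)"
  unfolding quadratic_module_def
proof (intro conjI ballI)
  show "\<Union>\<C> \<subseteq> A" using qm quadratic_module_subset by blast
  show "1 \<in> \<Union>\<C>" using assms(1) qm quadratic_module_one by blast
  fix a b assume "a \<in> \<Union>\<C>" "b \<in> \<Union>\<C>"
  then obtain N where "N \<in> \<C>" "a \<in> N" "b \<in> N" using chain by blast
  then show "a + b \<in> \<Union>\<C>" using qm quadratic_module_add by blast
next
  fix c g assume "c \<in> A" "g \<in> \<Union>\<C>"
  then show "c\<^sup>2 * g \<in> \<Union>\<C>" using qm quadratic_module_square_mult by blast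
qed

lemma Ychar_add: "y \<in> Ychar C \<Longrightarrow> a \<in> C \<Longrightarrow> b \<in> C \<Longrightarrow> y (a + b) = y a + y b"
  and Ychar_mult: "y \<in> Ychar C \<Longrightarrow> a \<in> C \<Longrightarrow> b \<in> C \<Longrightarrow> y (a * b) = y a * y b"
  and Ychar_scaleR: "y \<in> Ychar C \<Longrightarrow> a \<in> C \<Longrightarrow> y (r *\<^sub>R a) = r * y a"
  and Ychar_one: "y \<in> Ychar C \<Longrightarrow> y 1 = 1"
  and Ychar_extensional: "y \<in> Ychar C \<Longrightarrow> y \<in> extensional C"
  unfolding Ychar_def by blast+

lemma Ychar_of_real: "y \<in> Ychar C \<Longrightarrow> subalgebra C \<Longrightarrow> y (of_real r) = r"
  unfolding of_real_def using Ychar_scaleR[of y C 1 r] Ychar_one[of y C] subalgebra_one[of C] by simp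

lemma Ychar_uminus: "y \<in> Ychar C \<Longrightarrow> a \<in> C \<Longrightarrow> y (- a) = - y a"
  using Ychar_scaleR[of y C a "- 1"] by simp

lemma Ychar_diff:
  "y \<in> Ychar C \<Longrightarrow> subalgebra C \<Longrightarrow> a \<in> C \<Longrightarrow> b \<in> C \<Longrightarrow> y (a - b) = y a - y b"
  using Ychar_add[of y C a "- b"] Ychar_uminus[of y C b] subalgebra_uminus[of C b] by simp

lemma Ychar_power2: "y \<in> Ychar C \<Longrightarrow> a \<in> C \<Longrightarrow> y (a\<^sup>2) = (y a)\<^sup>2"
  using Ychar_mult[of y C a a] by (simp add: power2_eq_square)

lemma Ychar_restrict:
  assumes y: "y \<in> Ychar A" and "subalgebra B" "B \<subseteq> A"
  shows "restrict y B \<in> Ychar B"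
  unfolding Ychar_def
proof (intro CollectI conjI ballI allI)
  show "restrict y B 1 = 1" using assms Ychar_one subalgebra_one by auto
  fix a b assume ab: "a \<in> B" "b \<in> B"
  then have "a \<in> A" "b \<in> A" "a + b \<in> B" "a * b \<in> B"
    using assms by (auto intro: subalgebra_add subalgebra_mult)
  then show "restrict y B (a + b) = restrict y B a + restrict y B b"
    and "restrict y B (a * b) = restrict y B a * restrict y B b"
    using ab Ychar_add[OF y] Ychar_mult[OF y] by auto
next
  fix r :: real and a assume a: "a \<in> B"
  then have "a \<in> A" "r *\<^sub>R a \<in> B" using assms by (auto intro: subalgebra_scaleR)
  then show "restrict y B (r *\<^sub>R a) = r * restrict y B a"
    using a Ychar_scaleR[OF y] by auto
qed simp

section \<open>Maximal archimedean quadratic modules give characters\<close>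

locale maximal_archimedean_quadratic_module =
  fixes A :: "'a::{comm_ring_1,real_algebra_1} set" and M :: "'a set"
  assumes subalg: "subalgebra A" and qmod: "quadratic_module A M" and arch: "archimedean A M"
    and proper: "- 1 \<notin> M"
    and maximal: "\<And>N. quadratic_module A N \<Longrightarrow> M \<subseteq> N \<Longrightarrow> - 1 \<notin> N \<Longrightarrow> N = M"
begin

definition sums_of_squares :: "'a set"
  where "sums_of_squares = \<Inter>{N. quadratic_module A N}"

lemma quadratic_module_sums_of_squares: "quadratic_module A sums_of_squares"
  using qmod unfolding sums_of_squares_def quadratic_module_def by auto

lemma sums_of_squares_subset: "sums_of_squares \<subseteq> M"
  unfolding sums_of_squares_def using qmod by auto

lemma sums_of_squares_mult: "s \<in> sums_of_squares \<Longrightarrow> m \<in> M \<Longrightarrow> s * m \<in> M"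
proof -
  assume "s \<in> sums_of_squares" "m \<in> M"
  let ?T = "{s \<in> A. \<forall>m\<in>M. s * m \<in> M}"
  have "quadratic_module A ?T"
    unfolding quadratic_module_def
  proof (intro conjI ballI)
    fix c g assume "c \<in> A" "g \<in> ?T"
    then show "c\<^sup>2 * g \<in> ?T"
      using quadratic_module_square_mult[OF qmod] subalgebra_closed[OF subalg]
        quadratic_module_subset[OF qmod]
      by (auto simp: mult.assoc)
  qed (use qmod subalg in \<open>auto simp: distrib_right intro: quadratic_module_add subalgebra_add subalgebra_one\<close>)
  then have "sums_of_squares \<subseteq> ?T" unfolding sums_of_squares_def by auto
  with \<open>s \<in> sums_of_squares\<close> \<open>m \<in> M\<close> show ?thesis by auto
qed

lemma minus_one_eq_if_notin:
  assumes a: "a \<in> A" "a \<notin> M"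
  shows "\<exists>m\<in>M. \<exists>s\<in>sums_of_squares. - 1 = m + s * a"
proof -
  let ?N = "{m + s * a | m s. m \<in> M \<and> s \<in> sums_of_squares}"
  have SOS: "quadratic_module A sums_of_squares" by (rule quadratic_module_sums_of_squares)
  have "quadratic_module A ?N"
    unfolding quadratic_module_def
  proof (intro conjI ballI)
    show "?N \<subseteq> A"
      using qmod SOS a subalg quadratic_module_subset by (blast intro: subalgebra_add subalgebra_mult)
    fix x y assume "x \<in> ?N" "y \<in> ?N"
    then obtain m1 s1 m2 s2 where "x = m1 + s1 * a" "y = m2 + s2 * a"
      "m1 \<in> M" "m2 \<in> M" "s1 \<in> sums_of_squares" "s2 \<in> sums_of_squares" by auto
    then show "x + y \<in> ?N"
      by (intro CollectI exI[of _ "m1 + m2"] exI[of _ "s1 + s2"])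
        (auto simp: algebra_simps intro: quadratic_module_add[OF qmod] quadratic_module_add[OF SOS])
  next
    fix c g assume "c \<in> A" "g \<in> ?N"
    then obtain m s where "g = m + s * a" "m \<in> M" "s \<in> sums_of_squares" by auto
    moreover have "c\<^sup>2 * g = c\<^sup>2 * m + (c\<^sup>2 * s) * a" using calculation(1) by (simp add: algebra_simps)
    ultimately show "c\<^sup>2 * g \<in> ?N"
      using \<open>c \<in> A\<close> quadratic_module_square_mult[OF qmod] quadratic_module_square_mult[OF SOS] by blast
  next
    show "1 \<in> ?N" using quadratic_module_one[OF qmod] quadratic_module_zero[OF subalg SOS]
      by (intro CollectI exI[of _ 1] exI[of _ 0]) auto
  qed
  moreover have "M \<subseteq> ?N" using quadratic_module_zero[OF subalg SOS] by force
  moreover have "a \<in> ?N" using quadratic_module_zero[OF subalg qmod] quadratic_module_one[OF SOS]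
    by (intro CollectI exI[of _ 0] exI[of _ 1]) auto
  ultimately have "- 1 \<in> ?N" using maximal[of ?N] a by blast
  then show ?thesis by auto
qed

lemma support_mult:
  assumes "x \<in> M" "- x \<in> M" "a \<in> A"
  shows "a * x \<in> M"
proof -
  let ?c1 = "of_real (1/2) * (a + 1)" and ?c2 = "of_real (1/2) * (a - 1)"
  have "?c1 \<in> A" "?c2 \<in> A" using subalg assms by (auto intro: subalgebra_closed)
  then have "?c1\<^sup>2 * x + ?c2\<^sup>2 * (- x) \<in> M"
    using assms by (intro quadratic_module_add[OF qmod] quadratic_module_square_mult[OF qmod])
  moreover have "?c1\<^sup>2 * x + ?c2\<^sup>2 * (- x) = (of_real (1/4) * 4) * a * x"
    by (simp add: power2_eq_square algebra_simps flip: of_real_mult)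
  moreover have "(of_real (1/4) * 4 :: 'a) = of_real (1/4 * 4)"
    by (simp only: of_real_mult of_real_numeral)
  ultimately show ?thesis by simp
qed

lemma mem_or_uminus_mem: assumes "a \<in> A" shows "a \<in> M \<or> - a \<in> M"
proof (rule ccontr)
  assume n: "\<not> (a \<in> M \<or> - a \<in> M)"
  obtain m1 s1 where h1: "m1 \<in> M" "s1 \<in> sums_of_squares" "- 1 = m1 + s1 * a"
    using minus_one_eq_if_notin assms n by blast
  obtain m2 s2 where h2: "m2 \<in> M" "s2 \<in> sums_of_squares" "- 1 = m2 - s2 * a"
    using minus_one_eq_if_notin subalgebra_uminus[OF subalg assms] n by fastforce
  have m: "m1 = - 1 - s1 * a" "m2 = - 1 + s2 * a"
    using h1(3) h2(3) by (simp_all add: algebra_simps)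
  have "- s1 = s2 + s2 * m1 + s1 * m2" unfolding m by (simp add: algebra_simps)
  moreover have "s2 + s2 * m1 + s1 * m2 \<in> M"
    using h1 h2 sums_of_squares_subset sums_of_squares_mult by (auto intro!: quadratic_module_add[OF qmod])
  ultimately have "- s1 \<in> M" by simp
  then have "a * s1 \<in> M" using support_mult[of s1 a] sums_of_squares_subset h1 assms by auto
  then have "m1 + s1 * a \<in> M" using h1 by (auto intro: quadratic_module_add[OF qmod] simp: mult.commute)
  then show False using h1 proper by simp
qed

lemma mem_if_add_of_real_mem:
  assumes u: "u \<in> A" and small: "\<And>e. e > 0 \<Longrightarrow> u + of_real e \<in> M"
  shows "u \<in> M"
proof (rule ccontr)
  assume "u \<notin> M"
  then obtain m s where ms: "m \<in> M" "s \<in> sums_of_squares" "- 1 = m + s * u"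
    using minus_one_eq_if_notin u by blast
  have "s \<in> A" using ms sums_of_squares_subset quadratic_module_subset[OF qmod] by auto
  then obtain N where N: "N \<ge> 1" "of_real N - s \<in> M"
    using archimedean_upper_bound[OF arch subalg] by blast
  define e where "e = 1 / (2 * N)"
  have e: "e > 0" using N e_def by simp
  have "(m + s * (u + of_real e)) + of_real e * (of_real N - s) \<in> M"
    using ms sums_of_squares_mult[OF ms(2) small[OF e]] N(2) e
    by (intro quadratic_module_add[OF qmod] quadratic_module_of_real_mult[OF subalg qmod]) auto
  moreover have "(m + s * (u + of_real e)) + of_real e * (of_real N - s) = of_real (e * N - 1)"
  proof -
    have "(m + s * (u + of_real e)) + of_real e * (of_real N - s) = (m + s * u) + of_real (e * N)"
      by (simp add: algebra_simps)
    also have "\<dots> = of_real (e * N - 1)" using ms(3)[symmetric] by simp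
    finally show ?thesis .
  qed
  ultimately have "of_real (e * N - 1) \<in> M" by simp
  then have "e * N - 1 \<ge> 0" by (rule proper_quadratic_module_of_real_nonneg[OF subalg qmod proper])
  then show False using N unfolding e_def by simp
qed

text \<open>Congruence modulo the support \<open>M \<inter> -M\<close>, an ideal (\<open>support_mult\<close>) whose quotient
  is \<open>\<real>\<close>: this is where the character comes from.\<close>

definition eq_mod_support :: "'a \<Rightarrow> real \<Rightarrow> bool"
  where "eq_mod_support a r \<longleftrightarrow> a - of_real r \<in> M \<and> of_real r - a \<in> M"

lemma eq_mod_support_unique: "eq_mod_support a r \<Longrightarrow> eq_mod_support a r' \<Longrightarrow> r = r'"
proof -
  assume "eq_mod_support a r" "eq_mod_support a r'"
  then have "(of_real r - a) + (a - of_real r') \<in> M" "(of_real r' - a) + (a - of_real r) \<in> M"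
    unfolding eq_mod_support_def by (blast intro: quadratic_module_add[OF qmod])+
  then have "of_real (r - r') \<in> M" "of_real (r' - r) \<in> M" by (auto simp: of_real_diff)
  then have "r - r' \<ge> 0" "r' - r \<ge> 0"
    using proper_quadratic_module_of_real_nonneg[OF subalg qmod proper] by blast+
  then show ?thesis by simp
qed

lemma eq_mod_support_Sup:
  assumes a: "a \<in> A"
  shows "eq_mod_support a (Sup {r. a - of_real r \<in> M})"
proof -
  let ?S = "{r. a - of_real r \<in> M}"
  obtain N1 where N1: "of_real N1 - (- a) \<in> M"
    using archimedean_upper_bound[OF arch subalg subalgebra_uminus[OF subalg a]] by blast
  obtain N2 where N2: "of_real N2 - a \<in> M" using archimedean_upper_bound[OF arch subalg a] by blast
  have ne: "- N1 \<in> ?S" using N1 by (simp add: algebra_simps)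
  have bdd: "bdd_above ?S"
  proof
    fix r assume "r \<in> ?S"
    then have "(a - of_real r) + (of_real N2 - a) \<in> M" using N2 quadratic_module_add[OF qmod] by blast
    then have "N2 - r \<ge> 0"
      by (intro proper_quadratic_module_of_real_nonneg[OF subalg qmod proper]) (simp add: of_real_diff)
    then show "r \<le> N2" by simp
  qed
  have down: "r' \<in> ?S" if "r \<in> ?S" "r' \<le> r" for r r'
  proof -
    have "of_real (r - r') \<in> M" using that quadratic_module_of_real[OF subalg qmod, of "r - r'"] by simp
    then have "(a - of_real r) + of_real (r - r') \<in> M"
      using that(1) quadratic_module_add[OF qmod] by blast
    then show ?thesis by (simp add: of_real_diff)
  qed
  define z where "z = Sup ?S"
  have "a - of_real z \<in> M"
  proof (rule mem_if_add_of_real_mem)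
    show "a - of_real z \<in> A" using a subalg by (auto intro: subalgebra_closed)
    fix e :: real assume "e > 0"
    then have "z - e < Sup ?S" unfolding z_def by simp
    then obtain r where "r \<in> ?S" "r > z - e" using less_cSup_iff[OF _ bdd] ne by blast
    then have "z - e \<in> ?S" using down[of r "z - e"] by simp
    then show "a - of_real z + of_real e \<in> M" by (simp add: of_real_diff algebra_simps)
  qed
  moreover have "of_real z - a \<in> M"
  proof (rule mem_if_add_of_real_mem)
    show "of_real z - a \<in> A" using a subalg by (auto intro: subalgebra_closed)
    fix e :: real assume "e > 0"
    then have "z + e \<notin> ?S" using cSup_upper[OF _ bdd, of "z + e"] unfolding z_def by force
    moreover have "a - of_real (z + e) \<in> A" using a subalg by (auto intro: subalgebra_closed)
    ultimately have "- (a - of_real (z + e)) \<in> M" using mem_or_uminus_mem by blast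
    then show "of_real z - a + of_real e \<in> M" by (simp add: algebra_simps)
  qed
  ultimately show ?thesis unfolding eq_mod_support_def z_def by blast
qed

lemma eq_mod_support_mult:
  assumes "eq_mod_support a r" "b \<in> A"
  shows "b * (a - of_real r) \<in> M" "b * (of_real r - a) \<in> M"
  using support_mult[of "a - of_real r" b] support_mult[of "of_real r - a" b] assms
  unfolding eq_mod_support_def by (auto simp: algebra_simps)

definition character :: "'a \<Rightarrow> real"
  where "character = restrict (\<lambda>a. Sup {r. a - of_real r \<in> M}) A"

lemma eq_mod_support_character: "a \<in> A \<Longrightarrow> eq_mod_support a (character a)"
  unfolding character_def using eq_mod_support_Sup by simp

lemma character_eqI: "a \<in> A \<Longrightarrow> eq_mod_support a r \<Longrightarrow> character a = r"
  using eq_mod_support_character eq_mod_support_unique by blast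

lemma character_in_Ychar: "character \<in> Ychar A"
  unfolding Ychar_def
proof (intro CollectI conjI ballI allI)
  show "character \<in> extensional A" unfolding character_def by simp
  show "character 1 = 1"
    by (rule character_eqI[OF subalgebra_one[OF subalg]])
      (simp add: eq_mod_support_def quadratic_module_zero[OF subalg qmod])
  fix a b assume ab: "a \<in> A" "b \<in> A"
  have a: "eq_mod_support a (character a)" and b: "eq_mod_support b (character b)"
    using eq_mod_support_character ab by auto
  show "character (a + b) = character a + character b"
  proof (rule character_eqI[OF subalgebra_add[OF subalg ab]])
    have "(a - of_real (character a)) + (b - of_real (character b)) \<in> M"
      "(of_real (character a) - a) + (of_real (character b) - b) \<in> M"
      using a b unfolding eq_mod_support_def by (auto intro: quadratic_module_add[OF qmod])
    then show "eq_mod_support (a + b) (character a + character b)"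
      unfolding eq_mod_support_def by (simp add: algebra_simps)
  qed
  show "character (a * b) = character a * character b"
  proof (rule character_eqI[OF subalgebra_mult[OF subalg ab]])
    have "b * (a - of_real (character a)) + of_real (character a) * (b - of_real (character b)) \<in> M"
      "b * (of_real (character a) - a) + of_real (character a) * (of_real (character b) - b) \<in> M"
      using eq_mod_support_mult[OF a ab(2)] eq_mod_support_mult[OF b subalgebra_of_real[OF subalg]]
      by (auto intro: quadratic_module_add[OF qmod])
    then show "eq_mod_support (a * b) (character a * character b)"
      unfolding eq_mod_support_def by (simp add: algebra_simps)
  qed
next
  fix r :: real and a assume a: "a \<in> A"
  show "character (r *\<^sub>R a) = r * character a"
  proof (rule character_eqI[OF subalgebra_scaleR[OF subalg a]])
    have "of_real r * (a - of_real (character a)) \<in> M" "of_real r * (of_real (character a) - a) \<in> M"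
      using eq_mod_support_mult[OF eq_mod_support_character[OF a] subalgebra_of_real[OF subalg]] by auto
    then show "eq_mod_support (r *\<^sub>R a) (r * character a)"
      unfolding eq_mod_support_def by (simp add: algebra_simps scaleR_conv_of_real)
  qed
qed

lemma character_nonneg: "g \<in> M \<Longrightarrow> character g \<ge> 0"
proof -
  assume g: "g \<in> M"
  then have "eq_mod_support g (character g)"
    using eq_mod_support_character quadratic_module_subset[OF qmod] by auto
  then have "(of_real (character g) - g) + g \<in> M"
    using g quadratic_module_add[OF qmod] unfolding eq_mod_support_def by blast
  then show ?thesis using proper_quadratic_module_of_real_nonneg[OF subalg qmod proper] by simp
qed

end

lemma proper_archimedean_quadratic_module_character:
  fixes A :: "'a::{comm_ring_1,real_algebra_1} set"
  assumes subalg: "subalgebra A" and qm: "quadratic_module A M" and ar: "archimedean A M"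
    and proper: "- 1 \<notin> M"
  shows "\<exists>z \<in> Ychar A. \<forall>g\<in>M. z g \<ge> 0"
proof -
  define \<F> where "\<F> = {N. quadratic_module A N \<and> M \<subseteq> N \<and> - 1 \<notin> N}"
  have "\<exists>M'\<in>\<F>. \<forall>N\<in>\<F>. M' \<subseteq> N \<longrightarrow> N = M'"
  proof (rule subset_Zorn_nonempty)
    show "\<F> \<noteq> {}" using qm proper unfolding \<F>_def by blast
    fix \<C> assume "\<C> \<noteq> {}" and chain: "subset.chain \<F> \<C>"
    then have "quadratic_module A (\<Union>\<C>)"
      using chain unfolding \<F>_def subset.chain_def
      by (intro quadratic_module_Union_chain) blast+
    then show "\<Union>\<C> \<in> \<F>"
      using \<open>\<C> \<noteq> {}\<close> chain unfolding \<F>_def subset.chain_def by blast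
  qed
  then obtain M' where "M' \<in> \<F>" and max: "\<forall>N\<in>\<F>. M' \<subseteq> N \<longrightarrow> N = M'" by blast
  then have M': "quadratic_module A M'" "M \<subseteq> M'" "- 1 \<notin> M'" unfolding \<F>_def by blast+
  interpret maximal_archimedean_quadratic_module A M'
  proof
    show "archimedean A M'" using archimedean_mono[OF ar M'(2)] .
    fix N assume "quadratic_module A N" "M' \<subseteq> N" "- 1 \<notin> N"
    moreover from this have "N \<in> \<F>" using M'(2) unfolding \<F>_def by blast
    ultimately show "N = M'" using max by blast
  qed (fact subalg M'(1,3))+
  show ?thesis using character_in_Ychar character_nonneg M'(2) by blast
qed

section \<open>Extending characters from a subalgebra\<close>

lemma restrict_KY_subset:
  assumes "subalgebra B" "B \<subseteq> A"
  shows "(\<lambda>y. restrict y B) ` KY A Q \<subseteq> KY B (Q \<inter> B)"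
  using assms Ychar_restrict unfolding KY_def by fastforce

lemma of_real_mult_square_add:
  fixes b :: "'a::{comm_ring_1,real_algebra_1}"
  shows "of_real k * (of_real t + b)\<^sup>2 = of_real (k * t\<^sup>2) + of_real (2 * k * t) * b + of_real k * b\<^sup>2"
  by (simp add: power2_eq_square algebra_simps)

lemma completing_square_identity:
  fixes a b c N1 N2 :: "'a::{comm_ring_1,real_algebra_1}"
  assumes "d > 0"
  shows "c * (a + of_real d + b) + of_real (1/(2*d)) * (of_real d * c - b)\<^sup>2
      + of_real d * (N1 - c) + of_real (d/2) * (N2 - c\<^sup>2)
    = c * a + of_real d * N1 + of_real (d/2) * N2 + of_real (1/(2*d)) * b\<^sup>2"
proof -
  have "of_real (1/(2*d)) * 2 * of_real d = (of_real (1/(2*d) * 2 * d) :: 'a)"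
    by (simp only: of_real_mult of_real_numeral)
  with assms have lin: "of_real (1/(2*d)) * 2 * of_real d = (1::'a)" by simp
  have "of_real (1/(2*d)) * (of_real d)\<^sup>2 = (of_real (1/(2*d) * d\<^sup>2) :: 'a)"
    by (simp only: of_real_mult of_real_power)
  with assms have quad: "of_real (1/(2*d)) * (of_real d)\<^sup>2 = (of_real (d/2) :: 'a)"
    by (simp add: power2_eq_square)
  have "c * (a + of_real d + b) + of_real (1/(2*d)) * (of_real d * c - b)\<^sup>2
      + of_real d * (N1 - c) + of_real (d/2) * (N2 - c\<^sup>2)
    = c * a + of_real d * N1 + of_real (d/2) * N2 + of_real (1/(2*d)) * b\<^sup>2
      + c\<^sup>2 * (of_real (1/(2*d)) * (of_real d)\<^sup>2 - of_real (d/2))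
      - c * b * (of_real (1/(2*d)) * 2 * of_real d - 1)"
    by (simp add: algebra_simps power2_eq_square)
  then show ?thesis by (simp only: lin quad) simp
qed

locale character_extension =
  fixes A B :: "'a::{comm_ring_1,real_algebra_1} set" and Q :: "'a set" and y :: "'a \<Rightarrow> real"
  assumes subalg_A: "subalgebra A" and subalg_B: "subalgebra B" and subset: "B \<subseteq> A"
    and qmod: "quadratic_module A Q" and arch: "archimedean A Q"
    and character: "y \<in> Ychar B" and nonneg: "\<And>g. g \<in> Q \<Longrightarrow> g \<in> B \<Longrightarrow> y g \<ge> 0"
begin

definition Q_ker :: "'a set"
  where "Q_ker = {a \<in> A. \<forall>e>0. \<exists>\<beta>\<in>B. y \<beta> = 0 \<and> a + of_real e + \<beta> \<in> Q}"

lemma Q_kerD: "a \<in> Q_ker \<Longrightarrow> e > 0 \<Longrightarrow> \<exists>\<beta>\<in>B. y \<beta> = 0 \<and> a + of_real e + \<beta> \<in> Q"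
  unfolding Q_ker_def by blast

lemma Q_kerI:
  "a \<in> A \<Longrightarrow> (\<And>e. e > 0 \<Longrightarrow> \<exists>\<beta>\<in>B. y \<beta> = 0 \<and> a + of_real e + \<beta> \<in> Q) \<Longrightarrow> a \<in> Q_ker"
  unfolding Q_ker_def by blast

lemma Q_subset_Q_ker: "Q \<subseteq> Q_ker"
proof
  fix a assume a: "a \<in> Q"
  show "a \<in> Q_ker"
  proof (rule Q_kerI)
    show "a \<in> A" using quadratic_module_subset[OF qmod] a by blast
    fix e :: real assume "e > 0"
    then have "a + of_real e + 0 \<in> Q"
      using quadratic_module_add[OF qmod a quadratic_module_of_real[OF subalg_A qmod]] by simp
    then show "\<exists>\<beta>\<in>B. y \<beta> = 0 \<and> a + of_real e + \<beta> \<in> Q"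
      using subalgebra_zero[OF subalg_B] Ychar_of_real[OF character subalg_B, of 0] by auto
  qed
qed

lemma Q_ker_add:
  assumes "a \<in> Q_ker" "b \<in> Q_ker"
  shows "a + b \<in> Q_ker"
proof (rule Q_kerI)
  show "a + b \<in> A" using assms subalgebra_add[OF subalg_A] unfolding Q_ker_def by blast
  fix e :: real assume "e > 0"
  then obtain \<beta>1 \<beta>2 where \<beta>: "\<beta>1 \<in> B" "y \<beta>1 = 0" "a + of_real (e/2) + \<beta>1 \<in> Q"
    "\<beta>2 \<in> B" "y \<beta>2 = 0" "b + of_real (e/2) + \<beta>2 \<in> Q"
    using Q_kerD[OF assms(1), of "e/2"] Q_kerD[OF assms(2), of "e/2"] by auto
  have "(a + of_real (e/2) + \<beta>1) + (b + of_real (e/2) + \<beta>2) \<in> Q"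
    using quadratic_module_add[OF qmod \<beta>(3,6)] .
  moreover have "(a + of_real (e/2) + \<beta>1) + (b + of_real (e/2) + \<beta>2) = a + b + of_real e + (\<beta>1 + \<beta>2)"
    by (simp add: algebra_simps flip: of_real_add)
  ultimately show "\<exists>\<beta>\<in>B. y \<beta> = 0 \<and> a + b + of_real e + \<beta> \<in> Q"
    using \<beta> subalgebra_add[OF subalg_B] Ychar_add[OF character]
    by (intro bexI[of _ "\<beta>1 + \<beta>2"]) auto
qed

text \<open>Here \<open>c\<^sup>2 \<beta>\<close> need not lie in \<open>B\<close>; completing the square trades it for
  \<open>\<beta>\<^sup>2 / (2d) \<in> B\<close> at the cost of \<open>d (N\<^sub>1 - c\<^sup>2) + d/2 (N\<^sub>2 - c\<^sup>4)\<close>, which is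
  in \<open>Q\<close> by the archimedean property and as small as we like.\<close>

lemma Q_ker_square_mult:
  assumes c: "c \<in> A" and a: "a \<in> Q_ker"
  shows "c\<^sup>2 * a \<in> Q_ker"
proof (rule Q_kerI)
  have c2: "c\<^sup>2 \<in> A" "(c\<^sup>2)\<^sup>2 \<in> A"
    using c subalgebra_power2[OF subalg_A] by blast+
  show "c\<^sup>2 * a \<in> A" using a c2 subalgebra_mult[OF subalg_A] unfolding Q_ker_def by blast
  fix e :: real assume e: "e > 0"
  obtain N1 N2 where N: "N1 \<ge> 1" "of_real N1 - c\<^sup>2 \<in> Q" "N2 \<ge> 1" "of_real N2 - (c\<^sup>2)\<^sup>2 \<in> Q"
    using archimedean_upper_bound[OF arch subalg_A] c2 by meson
  define d where "d = e / (N1 + N2/2)"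
  have d: "d > 0" using e N unfolding d_def by simp
  have "d * N1 + d/2 * N2 = d * (N1 + N2/2)" by (simp add: algebra_simps)
  also have "\<dots> = e" unfolding d_def using N by simp
  finally have de: "of_real d * of_real N1 + of_real (d/2) * of_real N2 = (of_real e :: 'a)"
    by (simp flip: of_real_mult of_real_add)
  obtain \<beta> where \<beta>: "\<beta> \<in> B" "y \<beta> = 0" "a + of_real d + \<beta> \<in> Q" using Q_kerD[OF a d] by blast
  have "\<beta> \<in> A" using \<beta>(1) subset by blast
  let ?\<beta>' = "of_real (1/(2*d)) * \<beta>\<^sup>2"
  have "c\<^sup>2 * (a + of_real d + \<beta>) \<in> Q"
    by (rule quadratic_module_square_mult[OF qmod c \<beta>(3)])
  moreover have "of_real (1/(2*d)) * (of_real d * c\<^sup>2 - \<beta>)\<^sup>2 \<in> Q"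
    using d c2 \<open>\<beta> \<in> A\<close> subalg_A
    by (intro quadratic_module_of_real_mult[OF subalg_A qmod] quadratic_module_square[OF qmod])
      (auto intro: subalgebra_closed)
  moreover have "of_real d * (of_real N1 - c\<^sup>2) \<in> Q" "of_real (d/2) * (of_real N2 - (c\<^sup>2)\<^sup>2) \<in> Q"
    using N d by (auto intro: quadratic_module_of_real_mult[OF subalg_A qmod])
  ultimately have "c\<^sup>2 * (a + of_real d + \<beta>) + of_real (1/(2*d)) * (of_real d * c\<^sup>2 - \<beta>)\<^sup>2
      + of_real d * (of_real N1 - c\<^sup>2) + of_real (d/2) * (of_real N2 - (c\<^sup>2)\<^sup>2) \<in> Q"
    by (metis quadratic_module_add[OF qmod])
  then have "c\<^sup>2 * a + of_real e + ?\<beta>' \<in> Q"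
    unfolding completing_square_identity[OF d] de[symmetric] by (simp add: add.assoc)
  moreover have "?\<beta>' \<in> B" using \<beta>(1) subalg_B by (auto intro: subalgebra_closed)
  moreover have "y ?\<beta>' = 0"
    using Ychar_mult[OF character subalgebra_of_real[OF subalg_B] subalgebra_power2[OF subalg_B \<beta>(1)]]
      Ychar_power2[OF character \<beta>(1)] \<beta>(2) by simp
  ultimately show "\<exists>\<beta>\<in>B. y \<beta> = 0 \<and> c\<^sup>2 * a + of_real e + \<beta> \<in> Q" by blast
qed

lemma quadratic_module_Q_ker: "quadratic_module A Q_ker"
  unfolding quadratic_module_def
  using Q_ker_add Q_ker_square_mult Q_subset_Q_ker quadratic_module_one[OF qmod]
  by (auto simp: Q_ker_def)

lemma minus_one_notin_Q_ker: "- 1 \<notin> Q_ker"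
proof
  assume "- 1 \<in> Q_ker"
  then obtain \<beta> where \<beta>: "\<beta> \<in> B" "y \<beta> = 0" "- 1 + of_real (1/2) + \<beta> \<in> Q"
    using Q_kerD[of "- 1" "1/2"] by auto
  have "- 1 + of_real (1/2) + \<beta> \<in> B" using \<beta>(1) subalg_B by (auto intro: subalgebra_closed)
  moreover have "y (- 1 + of_real (1/2) + \<beta>) = - 1/2"
    using \<beta> subalg_B
    by (simp add: Ychar_add[OF character] Ychar_diff[OF character subalg_B] Ychar_one[OF character]
        Ychar_of_real[OF character subalg_B] subalgebra_closed)
  ultimately show False using nonneg[OF \<beta>(3)] by simp
qed

lemma kernel_subset_Q_ker:
  assumes b: "b \<in> B" "y b = 0"
  shows "b \<in> Q_ker"
proof (rule Q_kerI)
  show "b \<in> A" using b subset by blast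
  fix e :: real assume e: "e > 0"
  let ?\<beta> = "of_real (1/(4*e)) * b\<^sup>2"
  have "of_real (2*e) + b \<in> A"
    using \<open>b \<in> A\<close> by (intro subalgebra_add[OF subalg_A] subalgebra_of_real[OF subalg_A])
  then have "of_real (1/(4*e)) * (of_real (2*e) + b)\<^sup>2 \<in> Q"
    using e by (intro quadratic_module_of_real_mult[OF subalg_A qmod] quadratic_module_square[OF qmod]) auto
  moreover have "of_real (1/(4*e)) * (of_real (2*e) + b)\<^sup>2 = b + of_real e + ?\<beta>"
    using e unfolding of_real_mult_square_add by (simp add: power2_eq_square)
  moreover have "?\<beta> \<in> B" using b subalg_B by (auto intro: subalgebra_closed)
  moreover have "y ?\<beta> = 0"
    using Ychar_mult[OF character subalgebra_of_real[OF subalg_B] subalgebra_power2[OF subalg_B b(1)]]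
      Ychar_power2[OF character b(1)] b(2) by simp
  ultimately show "\<exists>\<beta>\<in>B. y \<beta> = 0 \<and> b + of_real e + \<beta> \<in> Q" by auto
qed

lemma extension_exists: "\<exists>z\<in>KY A Q. restrict z B = y"
proof -
  obtain z where z: "z \<in> Ychar A" "\<And>g. g \<in> Q_ker \<Longrightarrow> z g \<ge> 0"
    using proper_archimedean_quadratic_module_character[OF subalg_A quadratic_module_Q_ker
        archimedean_mono[OF arch Q_subset_Q_ker] minus_one_notin_Q_ker] by blast
  have "restrict z B b = y b" for b
  proof (cases "b \<in> B")
    case False
    then show ?thesis using Ychar_extensional[OF character] by (simp add: extensional_def)
  next
    case True
    let ?b = "b - of_real (y b)"
    have "?b \<in> B" "- ?b \<in> B" using True subalg_B by (auto intro: subalgebra_closed)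
    moreover have "y ?b = 0"
      using Ychar_diff[OF character subalg_B True subalgebra_of_real[OF subalg_B]]
        Ychar_of_real[OF character subalg_B] by simp
    moreover have "y (- ?b) = 0" using Ychar_uminus[OF character \<open>?b \<in> B\<close>] \<open>y ?b = 0\<close> by simp
    ultimately have "z ?b \<ge> 0" "z (- ?b) \<ge> 0" using z(2) kernel_subset_Q_ker by blast+
    moreover have "z (- ?b) = - z ?b" using Ychar_uminus[OF z(1)] \<open>?b \<in> B\<close> subset by blast
    moreover have "z ?b = z b - y b"
      using True subset Ychar_diff[OF z(1) subalg_A _ subalgebra_of_real[OF subalg_A]]
        Ychar_of_real[OF z(1) subalg_A] by auto
    ultimately show ?thesis using True by simp
  qed
  then show ?thesis using z Q_subset_Q_ker unfolding KY_def by (intro bexI[of _ z]) auto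
qed

end

lemma restrict_KY_eq:
  fixes A :: "'a::{comm_ring_1,real_algebra_1} set"
  assumes "subalgebra A" "subalgebra B" "B \<subseteq> A" "quadratic_module A Q" "archimedean A Q"
  shows "(\<lambda>y. restrict y B) ` KY A Q = KY B (Q \<inter> B)"
proof
  show "KY B (Q \<inter> B) \<subseteq> (\<lambda>y. restrict y B) ` KY A Q"
  proof
    fix y assume "y \<in> KY B (Q \<inter> B)"
    then interpret character_extension A B Q y using assms by unfold_locales (auto simp: KY_def)
    show "y \<in> (\<lambda>y. restrict y B) ` KY A Q" using extension_exists by force
  qed
qed (rule restrict_KY_subset[OF assms(2,3)])

section \<open>Topology of the character spaces\<close>

lemma topspace_Ytop: "topspace (Ytop C) = Ychar C"
  unfolding Ytop_def Ychar_def by (auto simp: PiE_def)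

lemma continuous_map_Ytop_eval: "c \<in> C \<Longrightarrow> continuous_map (Ytop C) euclideanreal (\<lambda>y. y c)"
  unfolding Ytop_def
  by (intro continuous_map_from_subtopology continuous_map_product_projection)

lemma continuous_map_restrict_Ytop:
  assumes "subalgebra B" "B \<subseteq> A"
  shows "continuous_map (Ytop A) (Ytop B) (\<lambda>y. restrict y B)"
proof -
  have "continuous_map (Ytop A) (powertop_real B) (\<lambda>y. restrict y B)"
    unfolding continuous_map_componentwise
    using assms(2) continuous_map_Ytop_eval by auto
  moreover have "(\<lambda>y. restrict y B) \<in> topspace (Ytop A) \<rightarrow> Ychar B"
    using Ychar_restrict[OF _ assms] unfolding topspace_Ytop by blast
  ultimately show ?thesis
    unfolding Ytop_def by (rule continuous_map_into_subtopology)
qed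

lemma closedin_KY:
  assumes "Q \<subseteq> C"
  shows "closedin (Ytop C) (KY C Q)"
proof -
  have eq: "KY C Q = \<Inter>(insert (topspace (Ytop C)) ((\<lambda>g. {y \<in> topspace (Ytop C). y g \<in> {0..}}) ` Q))"
    unfolding KY_def topspace_Ytop by auto
  have "closedin (Ytop C) {y \<in> topspace (Ytop C). y g \<in> {0..}}" if "g \<in> Q" for g
    using that assms continuous_map_Ytop_eval
    by (intro closedin_continuous_map_preimage) auto
  then show ?thesis unfolding eq by (intro closedin_Inter) auto
qed

lemma mmap_in_KY:
  fixes B :: "('x \<Rightarrow> real) set"
  assumes "subalgebra B" "x \<in> KX X Q"
  shows "mmap B x \<in> KY B (Q \<inter> B)"
  using assms unfolding KY_def KX_def Ychar_def mmap_def subalgebra_def by (auto simp: scaleR_fun_def)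

lemma restrict_mmap: "B \<subseteq> A \<Longrightarrow> restrict (mmap A x) B = mmap B x"
  unfolding mmap_def by (auto simp: fun_eq_iff)

theorem proposition3p7:
  shows
  "(\<forall>(A::'a::{comm_ring_1,real_algebra_1} set) B Q'.
      subalgebra A \<and> subalgebra B \<and> B \<subseteq> A \<and>
      quadratic_module A Q' \<and> archimedean A Q' \<longrightarrow>
      (\<lambda>y. restrict y B) ` KY A Q' = KY B (Q' \<inter> B))
   \<and>
   (\<forall>(X::'x set) (A::('x \<Rightarrow> real) set) B Q'.
      subalgebra A \<and> subalgebra B \<and> B \<subseteq> A \<and>
      quadratic_module A Q' \<and> archimedean A Q' \<and> KX X Q' = X \<longrightarrow>
      (mmap A ` X = KY A Q' \<longrightarrow> mmap B ` X = KY B (Q' \<inter> B)) \<and>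
      ((Ytop A) closure_of (mmap A ` X) = KY A Q' \<longrightarrow>
         (Ytop B) closure_of (mmap B ` X) = KY B (Q' \<inter> B)))"
proof (intro conjI allI impI)
  fix A :: "'a::{comm_ring_1,real_algebra_1} set" and B Q'
  assume "subalgebra A \<and> subalgebra B \<and> B \<subseteq> A \<and> quadratic_module A Q' \<and> archimedean A Q'"
  then show "(\<lambda>y. restrict y B) ` KY A Q' = KY B (Q' \<inter> B)" using restrict_KY_eq by blast
next
  fix X :: "'x set" and A :: "('x \<Rightarrow> real) set" and B Q'
  assume hyps: "subalgebra A \<and> subalgebra B \<and> B \<subseteq> A \<and> quadratic_module A Q' \<and> archimedean A Q'
    \<and> KX X Q' = X"
  then have sB: "subalgebra B" and BA: "B \<subseteq> A" and KX: "KX X Q' = X" by auto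
  have restrict_eq: "(\<lambda>y. restrict y B) ` KY A Q' = KY B (Q' \<inter> B)"
    using hyps restrict_KY_eq by blast
  have image_mmap: "(\<lambda>y. restrict y B) ` mmap A ` X = mmap B ` X"
    using restrict_mmap[OF BA] by (simp add: image_image)
  show "mmap B ` X = KY B (Q' \<inter> B)" if "mmap A ` X = KY A Q'"
    using that restrict_eq image_mmap by simp
  show "(Ytop B) closure_of (mmap B ` X) = KY B (Q' \<inter> B)"
    if closure: "(Ytop A) closure_of (mmap A ` X) = KY A Q'"
  proof
    show "(Ytop B) closure_of (mmap B ` X) \<subseteq> KY B (Q' \<inter> B)"
      using mmap_in_KY[OF sB] KX by (intro closure_of_minimal closedin_KY) auto
    have "KY B (Q' \<inter> B) = (\<lambda>y. restrict y B) ` ((Ytop A) closure_of (mmap A ` X))"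
      using restrict_eq closure by simp
    also have "\<dots> \<subseteq> (Ytop B) closure_of (mmap B ` X)"
      using continuous_map_image_closure_subset[OF continuous_map_restrict_Ytop[OF sB BA]] image_mmap
      by metis
    finally show "KY B (Q' \<inter> B) \<subseteq> (Ytop B) closure_of (mmap B ` X)" .
  qed
qed

end
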